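(* Consider Algorithm 1 (described in the context) applied to the multistage model, and suppose it does not stop at Step 1. Then for every iteration index $k\ge1$, the iterate $(\boldsymbol x^k,\eta^k,\boldsymbol y^k,u^k)$ is feasible for the multistage model, and $$z^{MS}_{T,R}(\boldsymbol x^*,\eta^*,\boldsymbol y^*,u^* )\le z^{MS}_{T,R}(\boldsymbol x^{k+1},\eta^{k+1},\boldsymbol y^{k+1},u^{k+1})\le z^{MS}_{T,R}(\boldsymbol x^{k},\eta^{k},\boldsymbol y^{k},u^{k}),$$ where $(\boldsymbol x^*,\eta^*,\boldsymbol y^*,u^* )$ is an optimal solution of the multistage model.
   Context: Setting. Integers $T\ge2$, $M,N\ge1$; costs $f_{ti}\ge0$ (vector $\boldsymbol f_t$), $c_{tij}\ge0$ (vector $\boldsymbol c_t\in\mathbb R^{MN}$), capacities $h_{ti}>0$; $(\boldsymbol A_t\boldsymbol y)_j=\sum_iy_{ij}$, $(\boldsymbol B_t\boldsymbol y)_i=\frac1{h_{ti}}\sum_jy_{ij}$. Ceilings and maxima of vectors are componentwise. Scenario tree: finite rooted tree, node set $\mathcal T$, root $1$, all root-to-leaf paths of $T$ nodes; $\mathcal T_t$ nodes at depth $t$, $t_n$ period of $n$, $\mathcal L=\mathcal T_T$, $a(n)$ parent, $\mathcal C(n)$ children, $\mathcal P(n)$ nodes on the root-to-$n$ path (inclusive); probabilities $p_n>0$, $\sum_{n\in\mathcal T_t}p_n=1$, $\sum_{m\in\mathcal C(n)}p_m=p_n$; demands $\boldsymbol d_n\in\mathbb R^N_{\ge0}$. Risk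 parameters $\lambda_t\in[0,1]$, $\alpha_t\in(0,1)$ ($t\ge2$); $\tilde{\boldsymbol f}_n=\boldsymbol f_{t_n}$ if $n=1$ else $(1-\lambda_{t_n})\boldsymbol f_{t_n}$; $\tilde{\boldsymbol c}_n=\boldsymbol c_{t_n}$ if $n=1$ else $(1-\lambda_{t_n})\boldsymbol c_{t_n}$; $\tilde\lambda_n=0$ if $n\in\mathcal L$ else $\lambda_{t_n+1}$; $\tilde\alpha_n=0$ if $n=1$ else $\lambda_{t_n}/(1-\alpha_{t_n})$. Multistage model: minimize $z^{MS}_{T,R}(\boldsymbol x,\eta,\boldsymbol y,u):=\sum_{n\in\mathcal T}p_n\big(\tilde{\boldsymbol f}_n^{\mathsf T}\sum_{m\in\mathcal P(n)}\boldsymbol x_m+\tilde{\boldsymbol c}_n^{\mathsf T}\boldsymbol y_n+\tilde\lambda_n\eta_n+\tilde\alpha_nu_n\big)$ over $\boldsymbol x_n\in\mathbb Z^M_+$, $\boldsymbol y_n\in\mathbb R^{MN}_+$ ($n\in\mathcal T$), $\eta_n\in\mathbb R$ ($n\notin\mathcal L$), $u_n\ge0$ ($n\ne1$), subject to $\boldsymbol A_{t_n}\boldsymbol y_n=\boldsymbol d_n$, $\boldsymbol B_{t_n}\boldsymbol y_n\le\sum_{m\in\mathcal P(n)}\boldsymbol x_m$ ($n\in\mathcal T$), $u_n+\eta_{a(n)}\ge\boldsymbol f_{t_n}^{\mathsf T}\sum_{m\in\mathcal P(n)}\boldsymbol x_m+\boldsymbol c_{t_n}^{\mathsf T}\boldsymbol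 y_n$ ($n\ne1$). Algorithm 1. Step 1: solve the LP relaxation (drop integrality of $\boldsymbol x$) of the multistage model, obtaining an optimal $(\boldsymbol x^{MSLP},\eta^{MSLP},\boldsymbol y^{MSLP},u^{MSLP})$; if all $\boldsymbol x^{MSLP}_n$ are integral, stop and return it. Step 2: set $k=0$ and $(\boldsymbol x^0,\eta^0,\boldsymbol y^0,u^0)=(\boldsymbol x^{MSLP},\eta^{MSLP},\boldsymbol y^{MSLP},u^{MSLP})$. Repeat until successive iterates differ by less than a tolerance $\epsilon$: (a) set $\boldsymbol x^{k+1}_1=\lceil\boldsymbol B_{t_1}\boldsymbol y^k_1\rceil$, $\boldsymbol x^{k+1}_n=\max_{m\in\mathcal P(n)}\lceil\boldsymbol B_{t_m}\boldsymbol y^k_m\rceil-\max_{m\in\mathcal P(a(n))}\lceil\boldsymbol B_{t_m}\boldsymbol y^k_m\rceil$ ($n\ne1$), $\eta^{k+1}_n=\max_{m\in\mathcal C(n)}\{\boldsymbol f_{t_m}^{\mathsf T}\sum_{l\in\mathcal P(m)}\boldsymbol x^{k+1}_l+\boldsymbol c_{t_m}^{\mathsf T}\boldsymbol y^k_m-u^k_m\}$ ($n\notin\mathcal L$) (this is an optimal solution of the multistage model in the variables $(\boldsymbol x,\eta)$ with $(\boldsymbol y,u)=(\boldsymbol y^k,u^k)$ fixed); (b) for each $n\ne1$ independently, let $(\boldsymbol y^{k+1}_n,u^{k+1}_n)$ be an optimal solution of $\min\tilde{\boldsymbol c}_n^{\mathsf T}\boldsymbol y_n+\tilde\alpha_nu_n$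 s.t. $\boldsymbol B_{t_n}\boldsymbol y_n\le\sum_{m\in\mathcal P(n)}\boldsymbol x^{k+1}_m$, $\boldsymbol A_{t_n}\boldsymbol y_n=\boldsymbol d_n$, $u_n-\boldsymbol c_{t_n}^{\mathsf T}\boldsymbol y_n\ge\boldsymbol f_{t_n}^{\mathsf T}\sum_{m\in\mathcal P(n)}\boldsymbol x^{k+1}_m-\eta^{k+1}_{a(n)}$, $\boldsymbol y_n\ge0$, $u_n\ge0$; for $n=1$ solve the same problem without $u_1$ and the last constraint; (c) $k\leftarrow k+1$. Return the final iterate, denoted $(\boldsymbol x^H,\eta^H,\boldsymbol y^H,u^H)$. *)

theory Defs
  imports Main "HOL-Library.Library" Complex_Main
begin

text \<open>Problem data of the risk-averse multistage model. Periods are 1..T,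
  facilities are indexed 0..M-1, customers 0..N-1.\<close>

record 'n msdata =
  Tn   :: "'n set"
  rt   :: 'n
  par  :: "'n \<Rightarrow> 'n"
  per  :: "'n \<Rightarrow> nat"
  prob :: "'n \<Rightarrow> real"
  dem  :: "'n \<Rightarrow> nat \<Rightarrow> real"
  TT   :: nat
  MM   :: nat
  NN   :: nat
  fc   :: "nat \<Rightarrow> nat \<Rightarrow> real"
  cc   :: "nat \<Rightarrow> nat \<Rightarrow> nat \<Rightarrow> real"
  cap  :: "nat \<Rightarrow> nat \<Rightarrow> real"
  lam  :: "nat \<Rightarrow> real"
  alph :: "nat \<Rightarrow> real"

definition children :: "'n msdata \<Rightarrow> 'n \<Rightarrow> 'n set" where
  "children D n = {m \<in> Tn D. m \<noteq> rt D \<and> par D m = n}"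

definition leaves :: "'n msdata \<Rightarrow> 'n set" where
  "leaves D = {n \<in> Tn D. per D n = TT D}"

definition anc :: "'n msdata \<Rightarrow> 'n \<Rightarrow> 'n set" where
  "anc D n = {(par D ^^ k) n | k. k < per D n}"

definition valid_data :: "'n msdata \<Rightarrow> bool" where
  "valid_data D \<longleftrightarrow>
     TT D \<ge> 2 \<and> MM D \<ge> 1 \<and> NN D \<ge> 1 \<and>
     (\<forall>t\<in>{1..TT D}. \<forall>i<MM D. fc D t i \<ge> 0 \<and> cap D t i > 0 \<and>
        (\<forall>j<NN D. cc D t i j \<ge> 0)) \<and>
     finite (Tn D) \<and> rt D \<in> Tn D \<and> per D (rt D) = 1 \<and>
     (\<forall>n\<in>Tn D. 1 \<le> per D n \<and> per D n \<le> TT D) \<and>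
     (\<forall>n\<in>Tn D. n \<noteq> rt D \<longrightarrow> par D n \<in> Tn D \<and> per D n = per D (par D n) + 1) \<and>
     (\<forall>n\<in>Tn D. per D n < TT D \<longrightarrow> children D n \<noteq> {}) \<and>
     (\<forall>n\<in>Tn D. prob D n > 0) \<and>
     (\<forall>t\<in>{1..TT D}. (\<Sum>n\<in>{n\<in>Tn D. per D n = t}. prob D n) = 1) \<and>
     (\<forall>n\<in>Tn D. per D n < TT D \<longrightarrow> (\<Sum>m\<in>children D n. prob D m) = prob D n) \<and>
     (\<forall>n\<in>Tn D. \<forall>j<NN D. dem D n j \<ge> 0) \<and>
     (\<forall>t\<in>{2..TT D}. 0 \<le> lam D t \<and> lam D t \<le> 1 \<and> 0 < alph D t \<and> alph D t < 1)"

text \<open>Components at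
  indices/nodes where the model has no variable (eta at leaves, u at the
  root) are ignored (they have coefficient 0 and appear in no constraint).\<close>
type_synonym 'n sol =
  "('n \<Rightarrow> nat \<Rightarrow> real) \<times> ('n \<Rightarrow> real) \<times> ('n \<Rightarrow> nat \<Rightarrow> nat \<Rightarrow> real) \<times> ('n \<Rightarrow> real)"

definition cumx :: "'n msdata \<Rightarrow> ('n \<Rightarrow> nat \<Rightarrow> real) \<Rightarrow> 'n \<Rightarrow> nat \<Rightarrow> real" where
  "cumx D x n i = (\<Sum>m\<in>anc D n. x m i)"

definition Bop :: "'n msdata \<Rightarrow> nat \<Rightarrow> (nat \<Rightarrow> nat \<Rightarrow> real) \<Rightarrow> nat \<Rightarrow> real" where
  "Bop D t yn i = (1 / cap D t i) * (\<Sum>j<NN D. yn i j)"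

definition Aop :: "'n msdata \<Rightarrow> (nat \<Rightarrow> nat \<Rightarrow> real) \<Rightarrow> nat \<Rightarrow> real" where
  "Aop D yn j = (\<Sum>i<MM D. yn i j)"

definition fcost :: "'n msdata \<Rightarrow> nat \<Rightarrow> (nat \<Rightarrow> real) \<Rightarrow> real" where
  "fcost D t X = (\<Sum>i<MM D. fc D t i * X i)"

definition ccost :: "'n msdata \<Rightarrow> nat \<Rightarrow> (nat \<Rightarrow> nat \<Rightarrow> real) \<Rightarrow> real" where
  "ccost D t yn = (\<Sum>i<MM D. \<Sum>j<NN D. cc D t i j * yn i j)"

definition wfac :: "'n msdata \<Rightarrow> 'n \<Rightarrow> real" where
  "wfac D n = (if n = rt D then 1 else 1 - lam D (per D n))"

definition lamtil :: "'n msdata \<Rightarrow> 'n \<Rightarrow> real" where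
  "lamtil D n = (if n \<in> leaves D then 0 else lam D (per D n + 1))"

definition alphatil :: "'n msdata \<Rightarrow> 'n \<Rightarrow> real" where
  "alphatil D n = (if n = rt D then 0 else lam D (per D n) / (1 - alph D (per D n)))"

definition zMS :: "'n msdata \<Rightarrow> 'n sol \<Rightarrow> real" where
  "zMS D s = (case s of (x, eta, y, u) \<Rightarrow>
     (\<Sum>n\<in>Tn D. prob D n *
        (wfac D n * fcost D (per D n) (cumx D x n) + wfac D n * ccost D (per D n) (y n)
         + lamtil D n * eta n + alphatil D n * u n)))"

text \<open>Feasibility; integral = True gives the multistage model, integral = False
  its LP relaxation.\<close>
definition feasible :: "'n msdata \<Rightarrow> bool \<Rightarrow> 'n sol \<Rightarrow> bool" where
  "feasible D integral s = (case s of (x, eta, y, u) \<Rightarrow>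
     (\<forall>n\<in>Tn D.
        (\<forall>i<MM D. x n i \<ge> 0 \<and> (integral \<longrightarrow> x n i \<in> \<int>)) \<and>
        (\<forall>i<MM D. \<forall>j<NN D. y n i j \<ge> 0) \<and>
        (\<forall>j<NN D. Aop D (y n) j = dem D n j) \<and>
        (\<forall>i<MM D. Bop D (per D n) (y n) i \<le> cumx D x n i) \<and>
        (n \<noteq> rt D \<longrightarrow> u n \<ge> 0 \<and>
           u n + eta (par D n) \<ge> fcost D (per D n) (cumx D x n) + ccost D (per D n) (y n))))"

definition is_opt :: "'n msdata \<Rightarrow> bool \<Rightarrow> 'n sol \<Rightarrow> bool" where
  "is_opt D integral s \<longleftrightarrow> feasible D integral s \<and>
     (\<forall>s'. feasible D integral s' \<longrightarrow> zMS D s \<le> zMS D s')"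

definition ceilB :: "'n msdata \<Rightarrow> ('n \<Rightarrow> nat \<Rightarrow> nat \<Rightarrow> real) \<Rightarrow> 'n \<Rightarrow> nat \<Rightarrow> real" where
  "ceilB D y m i = real_of_int \<lceil>Bop D (per D m) (y m) i\<rceil>"

definition stepA :: "'n msdata \<Rightarrow> 'n sol \<Rightarrow> 'n sol \<Rightarrow> bool" where
  "stepA D s s' = (case s of (x, eta, y, u) \<Rightarrow> case s' of (x', eta', y', u') \<Rightarrow>
     (\<forall>i<MM D. x' (rt D) i = ceilB D y (rt D) i) \<and>
     (\<forall>n\<in>Tn D. n \<noteq> rt D \<longrightarrow> (\<forall>i<MM D.
        x' n i = Max ((\<lambda>m. ceilB D y m i) ` anc D n)
                 - Max ((\<lambda>m. ceilB D y m i) ` anc D (par D n)))) \<and>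
     (\<forall>n\<in>Tn D. n \<notin> leaves D \<longrightarrow>
        eta' n = Max ((\<lambda>m. fcost D (per D m) (cumx D x' m) + ccost D (per D m) (y m) - u m)
                      ` children D n)))"

text \<open>Node subproblem of step (b), given (x^{k+1}, eta^{k+1}).\<close>
definition sub_feas :: "'n msdata \<Rightarrow> ('n \<Rightarrow> nat \<Rightarrow> real) \<Rightarrow> ('n \<Rightarrow> real) \<Rightarrow> 'n
    \<Rightarrow> (nat \<Rightarrow> nat \<Rightarrow> real) \<Rightarrow> real \<Rightarrow> bool" where
  "sub_feas D x eta n yn un \<longleftrightarrow>
     (\<forall>i<MM D. Bop D (per D n) yn i \<le> cumx D x n i) \<and>
     (\<forall>j<NN D. Aop D yn j = dem D n j) \<and>
     (\<forall>i<MM D. \<forall>j<NN D. yn i j \<ge> 0) \<and>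
     (n \<noteq> rt D \<longrightarrow> un \<ge> 0 \<and>
        un - ccost D (per D n) yn \<ge> fcost D (per D n) (cumx D x n) - eta (par D n))"

definition sub_obj :: "'n msdata \<Rightarrow> 'n \<Rightarrow> (nat \<Rightarrow> nat \<Rightarrow> real) \<Rightarrow> real \<Rightarrow> real" where
  "sub_obj D n yn un = (if n = rt D then ccost D (per D n) yn
                        else wfac D n * ccost D (per D n) yn + alphatil D n * un)"

definition stepB :: "'n msdata \<Rightarrow> 'n sol \<Rightarrow> bool" where
  "stepB D s' = (case s' of (x', eta', y', u') \<Rightarrow>
     (\<forall>n\<in>Tn D. sub_feas D x' eta' n (y' n) (u' n) \<and>
        (\<forall>yn un. sub_feas D x' eta' n yn un \<longrightarrow>
           sub_obj D n (y' n) (u' n) \<le> sub_obj D n yn un)))"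

text \<open>A run of Algorithm 1 that did not stop at Step 1, with iterates
  it 0, ..., it K (K iterations of Step 2 performed).\<close>
definition alg_run :: "'n msdata \<Rightarrow> nat \<Rightarrow> (nat \<Rightarrow> 'n sol) \<Rightarrow> bool" where
  "alg_run D K it \<longleftrightarrow>
     is_opt D False (it 0) \<and>
     \<not> (\<forall>n\<in>Tn D. \<forall>i<MM D. fst (it 0) n i \<in> \<int>) \<and>
     (\<forall>k<K. stepA D (it k) (it (Suc k)) \<and> stepB D (it (Suc k)))"

end

theory Submission
  imports Defs
begin

(* Algorithm 1 is block-coordinate descent on an objective that splits as
   cost_xeta D x eta + cost_yu D y u.  Step (a) sets the cumulative capacity at n to the
   least integer level covering every assignment on the root-to-n path.  For an integral
   feasible iterate the old cumulative capacity is an integer, nondecreasing along the path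
   and at least each B y_m, hence at least the new level; so the new eta, the largest
   excess over the children, is at most the old eta.  Step (b) minimises the (y, u) part
   node by node, and the old (y, u) remains admissible for the new (x, eta).  Ceilings
   make every iterate with k >= 1 integral; the LP iterate k = 0 is not, which is why the
   descent starts at k = 1. *)

lemma Max_ceiling_le_Ints:
  fixes f :: "'a \<Rightarrow> real"
  assumes "finite A" and "A \<noteq> {}" and "z \<in> \<int>" and "\<And>a. a \<in> A \<Longrightarrow> f a \<le> z"
  shows "Max ((\<lambda>a. real_of_int \<lceil>f a\<rceil>) ` A) \<le> z"
proof -
  obtain k where z: "z = of_int k" using \<open>z \<in> \<int>\<close> by (auto elim: Ints_cases)
  have "real_of_int \<lceil>f a\<rceil> \<le> z" if "a \<in> A" for a
    using assms(4)[OF that] unfolding z by (simp add: ceiling_le_iff)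
  then show ?thesis using assms(1,2) by simp
qed

lemma anc_eq_image: "anc D n = (\<lambda>k. (par D ^^ k) n) ` {..<per D n}"
  unfolding anc_def by auto

lemma finite_anc [simp]: "finite (anc D n)"
  unfolding anc_eq_image by simp

definition ceil_max :: "'n msdata \<Rightarrow> ('n \<Rightarrow> nat \<Rightarrow> nat \<Rightarrow> real) \<Rightarrow> 'n \<Rightarrow> nat \<Rightarrow> real" where
  "ceil_max D y n i = Max ((\<lambda>m. ceilB D y m i) ` anc D n)"

definition cost_xeta :: "'n msdata \<Rightarrow> ('n \<Rightarrow> nat \<Rightarrow> real) \<Rightarrow> ('n \<Rightarrow> real) \<Rightarrow> real" where
  "cost_xeta D x eta =
     (\<Sum>n\<in>Tn D. prob D n * (wfac D n * fcost D (per D n) (cumx D x n) + lamtil D n * eta n))"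

definition cost_yu :: "'n msdata \<Rightarrow> ('n \<Rightarrow> nat \<Rightarrow> nat \<Rightarrow> real) \<Rightarrow> ('n \<Rightarrow> real) \<Rightarrow> real" where
  "cost_yu D y u = (\<Sum>n\<in>Tn D. prob D n * sub_obj D n (y n) (u n))"

lemma zMS_split: "zMS D (x, eta, y, u) = cost_xeta D x eta + cost_yu D y u"
  unfolding zMS_def cost_xeta_def cost_yu_def sum.distrib[symmetric] prod.case
  by (rule sum.cong) (auto simp: sub_obj_def alphatil_def wfac_def algebra_simps)

locale ms_model =
  fixes D :: "'n msdata"
  assumes valid: "valid_data D"
begin

lemma finite_tree: "finite (Tn D)"
  and root_in_tree: "rt D \<in> Tn D"
  and per_root: "per D (rt D) = 1"
  using valid unfolding valid_data_def by auto

lemma per_bounds: "n \<in> Tn D \<Longrightarrow> 1 \<le> per D n \<and> per D n \<le> TT D"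
  using valid unfolding valid_data_def by auto

lemma parent_in_tree:
  "n \<in> Tn D \<Longrightarrow> n \<noteq> rt D \<Longrightarrow> par D n \<in> Tn D \<and> per D n = per D (par D n) + 1"
  using valid unfolding valid_data_def by auto

lemma children_nonempty: "n \<in> Tn D \<Longrightarrow> per D n < TT D \<Longrightarrow> children D n \<noteq> {}"
  using valid unfolding valid_data_def by auto

lemma prob_pos: "n \<in> Tn D \<Longrightarrow> prob D n > 0"
  using valid unfolding valid_data_def by auto

lemma fc_nonneg_cap_pos: "t \<in> {1..TT D} \<Longrightarrow> i < MM D \<Longrightarrow> fc D t i \<ge> 0 \<and> cap D t i > 0"
  using valid unfolding valid_data_def by auto

lemma lam_bounds: "t \<in> {2..TT D} \<Longrightarrow> 0 \<le> lam D t \<and> lam D t \<le> 1"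
  using valid unfolding valid_data_def by auto

lemma finite_children: "finite (children D n)"
  using finite_tree unfolding children_def by simp

lemma funpow_par_in_tree:
  assumes "m \<in> Tn D" and "j < per D m"
  shows "(par D ^^ j) m \<in> Tn D \<and> per D ((par D ^^ j) m) = per D m - j"
  using assms(2)
proof (induction j)
  case (Suc j)
  then have "(par D ^^ j) m \<in> Tn D" "per D ((par D ^^ j) m) = per D m - j" by simp_all
  moreover from this Suc.prems have "(par D ^^ j) m \<noteq> rt D" using per_root by auto
  ultimately show ?case using parent_in_tree Suc.prems by auto
qed (use assms(1) in simp)

lemma anc_subset_tree: "n \<in> Tn D \<Longrightarrow> anc D n \<subseteq> Tn D"
  using funpow_par_in_tree unfolding anc_def by auto

lemma self_in_anc: "n \<in> Tn D \<Longrightarrow> n \<in> anc D n"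
  using per_bounds[of n] unfolding anc_def by (auto intro!: exI[of _ 0])

lemma anc_root: "anc D (rt D) = {rt D}"
  unfolding anc_def using per_root by auto

lemma anc_nonroot:
  assumes "n \<in> Tn D" and "n \<noteq> rt D"
  shows "anc D n = insert n (anc D (par D n))"
proof -
  have "per D n = Suc (per D (par D n))" using parent_in_tree assms by simp
  moreover have "(\<lambda>k. (par D ^^ k) n) ` {..<Suc (per D (par D n))}
      = insert n ((\<lambda>k. (par D ^^ k) (par D n)) ` {..<per D (par D n)})"
    unfolding lessThan_Suc_eq_insert_0
    by (simp add: image_image funpow_Suc_right del: funpow.simps)
  ultimately show ?thesis unfolding anc_eq_image by simp
qed

lemma not_in_anc_parent:
  assumes "n \<in> Tn D" and "n \<noteq> rt D"
  shows "n \<notin> anc D (par D n)"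
proof
  assume "n \<in> anc D (par D n)"
  then obtain k where "k < per D (par D n)" and "n = (par D ^^ k) (par D n)"
    unfolding anc_def by auto
  moreover have "par D n \<in> Tn D" and per_n: "per D n = per D (par D n) + 1"
    using parent_in_tree[OF assms] by simp_all
  ultimately have "per D n = per D (par D n) - k" using funpow_par_in_tree[of "par D n" k] by simp
  with per_n show False by linarith
qed

lemma anc_anc_subset:
  assumes n: "n \<in> Tn D" and m: "m \<in> anc D n"
  shows "anc D m \<subseteq> anc D n"
proof
  fix z assume "z \<in> anc D m"
  then obtain l where l: "l < per D m" "z = (par D ^^ l) m" unfolding anc_def by auto
  obtain j where j: "j < per D n" "m = (par D ^^ j) n" using m unfolding anc_def by auto
  have "per D m = per D n - j" using funpow_par_in_tree[OF n j(1)] j(2) by simp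
  then have "l + j < per D n" and "z = (par D ^^ (l + j)) n"
    using l j by (simp_all add: funpow_add)
  then show "z \<in> anc D n" unfolding anc_def by blast
qed

lemma cumx_root: "cumx D x (rt D) i = x (rt D) i"
  unfolding cumx_def anc_root by simp

lemma cumx_nonroot:
  assumes "n \<in> Tn D" and "n \<noteq> rt D"
  shows "cumx D x n i = x n i + cumx D x (par D n) i"
  unfolding cumx_def anc_nonroot[OF assms]
  using sum.insert[OF finite_anc not_in_anc_parent[OF assms]] by simp

lemma cumx_mono_anc:
  assumes "n \<in> Tn D" and "m \<in> anc D n" and "\<And>l. l \<in> Tn D \<Longrightarrow> x l i \<ge> 0"
  shows "cumx D x m i \<le> cumx D x n i"
  unfolding cumx_def
  using assms(3) anc_subset_tree[OF assms(1)] anc_anc_subset[OF assms(1,2)]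
  by (intro sum_mono2) auto

lemma cumx_Ints: "(\<And>l. l \<in> Tn D \<Longrightarrow> x l i \<in> \<int>) \<Longrightarrow> n \<in> Tn D \<Longrightarrow> cumx D x n i \<in> \<int>"
  unfolding cumx_def using anc_subset_tree by (meson Ints_sum subsetD)

lemma fcost_mono:
  "t \<in> {1..TT D} \<Longrightarrow> (\<And>i. i < MM D \<Longrightarrow> X i \<le> Y i) \<Longrightarrow> fcost D t X \<le> fcost D t Y"
  unfolding fcost_def using fc_nonneg_cap_pos by (intro sum_mono mult_left_mono) auto

lemma Bop_nonneg:
  "t \<in> {1..TT D} \<Longrightarrow> i < MM D \<Longrightarrow> (\<And>j. j < NN D \<Longrightarrow> yn i j \<ge> 0) \<Longrightarrow> Bop D t yn i \<ge> 0"
  unfolding Bop_def using fc_nonneg_cap_pos by (auto intro!: sum_nonneg divide_nonneg_pos)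

lemma wfac_nonneg:
  assumes "n \<in> Tn D"
  shows "wfac D n \<ge> 0"
proof (cases "n = rt D")
  case False
  then have "per D n \<in> {2..TT D}"
    using assms parent_in_tree per_bounds[of n] per_bounds[of "par D n"] by auto
  then show ?thesis using False lam_bounds unfolding wfac_def by auto
qed (simp add: wfac_def)

lemma lamtil_nonneg: "n \<in> Tn D \<Longrightarrow> lamtil D n \<ge> 0"
  unfolding lamtil_def leaves_def using lam_bounds per_bounds by force

lemma ceilB_le_ceil_max: "n \<in> Tn D \<Longrightarrow> ceilB D y n i \<le> ceil_max D y n i"
  unfolding ceil_max_def using self_in_anc by (intro Max_ge) auto

lemma ceil_max_parent_le:
  assumes "n \<in> Tn D" and "n \<noteq> rt D"
  shows "ceil_max D y (par D n) i \<le> ceil_max D y n i"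
  unfolding ceil_max_def using anc_nonroot[OF assms] self_in_anc parent_in_tree[OF assms]
  by (intro Max_mono) auto

lemma ceil_max_Ints: "n \<in> Tn D \<Longrightarrow> ceil_max D y n i \<in> \<int>"
  unfolding ceil_max_def ceilB_def using self_in_anc
  by (intro Max_in[THEN rev_subsetD[of _ _ \<int>]]) auto

lemma ceil_max_root: "ceil_max D y (rt D) i = ceilB D y (rt D) i"
  unfolding ceil_max_def anc_root by simp

context
  fixes x eta y u x' eta' y' u'
  assumes step_a: "stepA D (x, eta, y, u) (x', eta', y', u')"
begin

lemma stepA_x_nonroot:
  "n \<in> Tn D \<Longrightarrow> n \<noteq> rt D \<Longrightarrow> i < MM D \<Longrightarrow> x' n i = ceil_max D y n i - ceil_max D y (par D n) i"
  using step_a unfolding stepA_def ceil_max_def by auto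

lemma stepA_cumx: "n \<in> Tn D \<Longrightarrow> i < MM D \<Longrightarrow> cumx D x' n i = ceil_max D y n i"
proof (induction "per D n" arbitrary: n rule: less_induct)
  case (less n)
  show ?case
  proof (cases "n = rt D")
    case True
    then show ?thesis using step_a less.prems by (simp add: stepA_def cumx_root ceil_max_root)
  next
    case False
    then have "x' n i = ceil_max D y n i - ceil_max D y (par D n) i"
      using stepA_x_nonroot less.prems by simp
    moreover have "cumx D x' (par D n) i = ceil_max D y (par D n) i"
      using less parent_in_tree[OF less.prems(1) False] by simp
    ultimately show ?thesis using cumx_nonroot[OF less.prems(1) False] by simp
  qed
qed

lemma stepA_x_nonneg_Ints:
  assumes n: "n \<in> Tn D" and i: "i < MM D" and y_root: "\<And>j. j < NN D \<Longrightarrow> y (rt D) i j \<ge> 0"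
  shows "0 \<le> x' n i \<and> x' n i \<in> \<int>"
proof (cases "n = rt D")
  case True
  have "per D (rt D) \<in> {1..TT D}" using per_bounds[OF root_in_tree] by simp
  then have "Bop D (per D (rt D)) (y (rt D)) i \<ge> 0" using Bop_nonneg i y_root by blast
  then show ?thesis using step_a True i unfolding stepA_def ceilB_def by auto
next
  case False
  then show ?thesis
    using stepA_x_nonroot[OF n False i] ceil_max_parent_le[OF n False] ceil_max_Ints n
      parent_in_tree[OF n False] by auto
qed

context
  assumes feas: "feasible D True (x, eta, y, u)"
begin

lemma stepA_cumx_le:
  assumes n: "n \<in> Tn D" and i: "i < MM D"
  shows "cumx D x' n i \<le> cumx D x n i"
proof -
  have x: "\<And>l. l \<in> Tn D \<Longrightarrow> x l i \<ge> 0 \<and> x l i \<in> \<int>"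
    using feas i unfolding feasible_def by auto
  have "Bop D (per D m) (y m) i \<le> cumx D x n i" if "m \<in> anc D n" for m
  proof -
    have "Bop D (per D m) (y m) i \<le> cumx D x m i"
      using feas i anc_subset_tree[OF n] that unfolding feasible_def by auto
    also have "\<dots> \<le> cumx D x n i" using cumx_mono_anc[OF n that] x by simp
    finally show ?thesis .
  qed
  then have "ceil_max D y n i \<le> cumx D x n i"
    unfolding ceil_max_def ceilB_def
    using self_in_anc[OF n] cumx_Ints[OF _ n] x by (intro Max_ceiling_le_Ints) auto
  then show ?thesis using stepA_cumx[OF n i] by simp
qed

lemma stepA_fcost_le:
  "n \<in> Tn D \<Longrightarrow> fcost D (per D n) (cumx D x' n) \<le> fcost D (per D n) (cumx D x n)"
  using fcost_mono per_bounds stepA_cumx_le by simp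

lemma stepA_eta_le:
  assumes n: "n \<in> Tn D" and not_leaf: "n \<notin> leaves D"
  shows "eta' n \<le> eta n"
proof -
  have "eta' n = Max ((\<lambda>m. fcost D (per D m) (cumx D x' m) + ccost D (per D m) (y m) - u m)
      ` children D n)"
    using step_a n not_leaf unfolding stepA_def by auto
  also have "\<dots> \<le> eta n"
  proof (rule Max.boundedI, simp_all add: finite_children, safe)
    have "per D n < TT D" using n not_leaf per_bounds unfolding leaves_def by force
    then show "children D n = {} \<Longrightarrow> False" using children_nonempty n by simp
  next
    fix m assume "m \<in> children D n"
    then have m: "m \<in> Tn D" "m \<noteq> rt D" "par D m = n" unfolding children_def by auto
    then have "fcost D (per D m) (cumx D x m) + ccost D (per D m) (y m) \<le> u m + eta n"
      using feas unfolding feasible_def by auto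
    then show "fcost D (per D m) (cumx D x' m) + ccost D (per D m) (y m) - u m \<le> eta n"
      using stepA_fcost_le[OF m(1)] by simp
  qed
  finally show ?thesis .
qed

lemma stepA_keeps_sub_feas:
  assumes n: "n \<in> Tn D"
  shows "sub_feas D x' eta' n (y n) (u n)"
  unfolding sub_feas_def
proof (intro conjI allI impI)
  fix i assume i: "i < MM D"
  have "Bop D (per D n) (y n) i \<le> ceilB D y n i" unfolding ceilB_def by simp
  also have "\<dots> \<le> cumx D x' n i" using ceilB_le_ceil_max[OF n] stepA_cumx[OF n i] by simp
  finally show "Bop D (per D n) (y n) i \<le> cumx D x' n i" .
next
  assume root: "n \<noteq> rt D"
  have "par D n \<in> Tn D" "par D n \<notin> leaves D" "n \<in> children D (par D n)"
    using parent_in_tree[OF n root] per_bounds[OF n] n root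
    unfolding leaves_def children_def by auto
  then have "fcost D (per D n) (cumx D x' n) + ccost D (per D n) (y n) - u n \<le> eta' (par D n)"
    using step_a finite_children unfolding stepA_def by (auto intro!: Max_ge)
  then show "fcost D (per D n) (cumx D x' n) - eta' (par D n) \<le> u n - ccost D (per D n) (y n)"
    by simp
qed (use feas n in \<open>auto simp: feasible_def\<close>)

lemma stepA_cost_xeta_le: "cost_xeta D x' eta' \<le> cost_xeta D x eta"
  unfolding cost_xeta_def
proof (rule sum_mono)
  fix n assume n: "n \<in> Tn D"
  have "wfac D n * fcost D (per D n) (cumx D x' n) \<le> wfac D n * fcost D (per D n) (cumx D x n)"
    using wfac_nonneg[OF n] stepA_fcost_le[OF n] by (simp add: mult_left_mono)
  moreover have "lamtil D n * eta' n \<le> lamtil D n * eta n"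
    using lamtil_nonneg[OF n] stepA_eta_le[OF n]
    by (cases "n \<in> leaves D") (auto simp: lamtil_def mult_left_mono)
  ultimately show "prob D n * (wfac D n * fcost D (per D n) (cumx D x' n) + lamtil D n * eta' n)
      \<le> prob D n * (wfac D n * fcost D (per D n) (cumx D x n) + lamtil D n * eta n)"
    using prob_pos[OF n] by (intro mult_left_mono) auto
qed

lemma stepB_cost_yu_le:
  assumes "stepB D (x', eta', y', u')"
  shows "cost_yu D y' u' \<le> cost_yu D y u"
  unfolding cost_yu_def
proof (intro sum_mono mult_left_mono)
  fix n assume n: "n \<in> Tn D"
  show "sub_obj D n (y' n) (u' n) \<le> sub_obj D n (y n) (u n)"
    using assms stepA_keeps_sub_feas[OF n] n unfolding stepB_def by auto
  show "0 \<le> prob D n" using prob_pos[OF n] by simp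
qed

end

end

lemma step_feasible:
  assumes feas: "feasible D b s" and step_a: "stepA D s s'" and step_b: "stepB D s'"
  shows "feasible D True s'"
proof -
  obtain x eta y u x' eta' y' u' where s: "s = (x, eta, y, u)" and s': "s' = (x', eta', y', u')"
    using prod_cases4 by metis
  have "y (rt D) i j \<ge> 0" if "i < MM D" "j < NN D" for i j
    using feas root_in_tree that unfolding s feasible_def by auto
  then have x': "0 \<le> x' n i \<and> x' n i \<in> \<int>" if "n \<in> Tn D" "i < MM D" for n i
    using stepA_x_nonneg_Ints[OF step_a[unfolded s s'] that] that(2) by blast
  have sub: "sub_feas D x' eta' n (y' n) (u' n)" if "n \<in> Tn D" for n
    using step_b that unfolding s' stepB_def by auto
  have "fcost D (per D n) (cumx D x' n) + ccost D (per D n) (y' n) \<le> u' n + eta' (par D n)"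
    if "n \<in> Tn D" "n \<noteq> rt D" for n
    using sub[OF that(1)] that(2) unfolding sub_feas_def by auto
  then show ?thesis using x' sub unfolding s' feasible_def sub_feas_def by auto
qed

lemma step_zMS_le:
  assumes "feasible D True s" and "stepA D s s'" and "stepB D s'"
  shows "zMS D s' \<le> zMS D s"
proof -
  obtain x eta y u x' eta' y' u' where s: "s = (x, eta, y, u)" and s': "s' = (x', eta', y', u')"
    using prod_cases4 by metis
  show ?thesis
    using stepA_cost_xeta_le stepB_cost_yu_le assms unfolding s s' zMS_split by (meson add_mono)
qed

end

theorem proposition3:
  fixes D :: "'n msdata" and K :: nat and it :: "nat \<Rightarrow> 'n sol" and sstar :: "'n sol"
  assumes "valid_data D"
    and "is_opt D True sstar"
    and "alg_run D K it"
  shows "(\<forall>k. 1 \<le> k \<and> k \<le> K \<longrightarrow> feasible D True (it k)) \<and>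
         (\<forall>k. 1 \<le> k \<and> k + 1 \<le> K \<longrightarrow>
            zMS D sstar \<le> zMS D (it (k + 1)) \<and> zMS D (it (k + 1)) \<le> zMS D (it k))"
proof -
  interpret ms_model D using assms(1) by (rule ms_model.intro)
  have feas0: "feasible D False (it 0)"
    and steps: "\<And>k. k < K \<Longrightarrow> stepA D (it k) (it (Suc k)) \<and> stepB D (it (Suc k))"
    using assms(3) unfolding alg_run_def is_opt_def by auto
  have feasible_it: "feasible D True (it k)" if "1 \<le> k" "k \<le> K" for k
    using that
  proof (induction k)
    case (Suc k)
    then have "feasible D (0 < k) (it k)" using feas0 by (cases k) auto
    then show ?case using step_feasible steps Suc.prems by simp
  qed simp
  have optimal: "zMS D sstar \<le> zMS D s" if "feasible D True s" for s
    using assms(2) that unfolding is_opt_def by blast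
  have "zMS D sstar \<le> zMS D (it (k + 1)) \<and> zMS D (it (k + 1)) \<le> zMS D (it k)"
    if "1 \<le> k" "k + 1 \<le> K" for k
    using optimal feasible_it[of "k + 1"] feasible_it[OF that(1)] step_zMS_le steps that by simp
  then show ?thesis using feasible_it by blast
qed

end
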